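(* Let $\langle A,C,d,O,v,(\prec_a)_{a\in A}\rangle$ be an infinite sequential game, let $\Gamma\subseteq\mathcal{P}(C^\omega)$, and assume: (1) every $\prec_a$ is a strict weak order; (2) the win-lose game $\langle C,D,W\rangle$ is determined for all $W\in\Gamma$ and $D\subseteq C^*$; (3) for every $a\in A$, every $\prec_a$-terminal interval $I$ and every $\gamma\in C^*$, $v^{-1}[I]\cap\gamma C^\omega\in\Gamma$; (4) for every $a\in A$, play $p\in C^\omega$ and increasing $\varphi:\mathbb{N}\to\mathbb{N}$, if $d(p_{<\varphi(n)})=a$ and $G_a(p_{<\varphi(n+1)})\subsetneq G_a(p_{<\varphi(n)})$ for all $n\in\mathbb{N}$, then $v(p)\in\bigcap_{n\in\mathbb{N}}G_a(p_{<\varphi(n)})$; (5) for every $a\in A$ and every $\gamma\in C^*$ there exists a strategy $s$ of $a$ with $g_a(\gamma,s)=G_a(\gamma)$. Then the game has a Nash equilibrium.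
   Context: The game consists of non-empty sets $A$ (agents), $C$ (choices), $O$ (outcomes), $d:C^*\to A$ (chooser after each history), $v:C^\omega\to O$, and preferences $\prec_a$ on $O$. A strategy of $a$ is a function $s:d^{-1}(\{a\})\to C$; a profile is identified with $\sigma:C^*\to C$, inducing the play $p(\sigma)$ with $p_n=\sigma(p_{<n})$ ($p_{<n}$ the length-$n$ prefix). $\sigma$ is a Nash equilibrium if there is no agent $a$ and strategy $s$ of $a$ with $v(p(\sigma))\prec_a v(p(\sigma_{a\mapsto s}))$, where $\sigma_{a\mapsto s}$ agrees with $s$ on $d^{-1}(\{a\})$ and with $\sigma$ elsewhere. For partial $t:\subseteq C^*\to C$, $P(t)$ is the set of plays of total profiles extending $t$. For a strategy $s$ of $a$ and $\gamma\in C^*$, $s|_\gamma$ is its restriction to histories extending $\gamma$; $g_a(\gamma,s):=\{o\in O\mid\exists p\in P(s|_\gamma)\cap\gamma C^\omega,\ \neg(o\prec_a v(p))\}$ and $G_a(\gamma):=\bigcap_s g_a(\gamma,s)$ over all strategies $s$ of $a$. A strict weak order is an irreflexive, transitive relation with $\neg(x\prec y)\wedge\neg(y\prec z)\Rightarrow\neg(x\prec z)$. A $\prec_a$-terminal interval is a set $I\subseteq O$ such that $o\in I$ and $\neg(o'\prec_a o)$ imply $o'\in I$. The win-lose game $\langle C,D,W\rangle$ is the two-player game where the first player chooses after histories in $D$, the second after histories in $C^*\setminus D$, and the first player wins iff the play lies in $W$; it is determined if one player has a winning strategy. *)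

theory Defs
  imports Main
begin

(* Histories C^* are lists, plays C^omega are functions nat => 'c.
   d :: 'c list => 'a (chooser), v :: (nat => 'c) => 'o (outcome),
   pref a x y  means  x \<prec>_a y. *)

definition pfx :: "(nat \<Rightarrow> 'c) \<Rightarrow> nat \<Rightarrow> 'c list" where
  "pfx p n = map p [0..<n]"

fun hist :: "('c list \<Rightarrow> 'c) \<Rightarrow> nat \<Rightarrow> 'c list" where
  "hist \<sigma> 0 = []"
| "hist \<sigma> (Suc n) = hist \<sigma> n @ [\<sigma> (hist \<sigma> n)]"

definition play :: "('c list \<Rightarrow> 'c) \<Rightarrow> nat \<Rightarrow> 'c" where
  "play \<sigma> n = \<sigma> (hist \<sigma> n)"

definition cyl :: "'c list \<Rightarrow> (nat \<Rightarrow> 'c) set" where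
  "cyl \<gamma> = {p. pfx p (length \<gamma>) = \<gamma>}"

(* \<sigma>_{a\<mapsto>s}: a strategy of a is represented by a total function whose values
   on d^{-1}{a} matter only *)
definition deviate :: "('c list \<Rightarrow> 'a) \<Rightarrow> ('c list \<Rightarrow> 'c) \<Rightarrow> 'a \<Rightarrow> ('c list \<Rightarrow> 'c) \<Rightarrow> 'c list \<Rightarrow> 'c" where
  "deviate d \<sigma> a s = (\<lambda>h. if d h = a then s h else \<sigma> h)"

definition nash_eq :: "('c list \<Rightarrow> 'a) \<Rightarrow> ((nat \<Rightarrow> 'c) \<Rightarrow> 'o) \<Rightarrow> ('a \<Rightarrow> 'o \<Rightarrow> 'o \<Rightarrow> bool)
    \<Rightarrow> ('c list \<Rightarrow> 'c) \<Rightarrow> bool" where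
  "nash_eq d v pref \<sigma> \<longleftrightarrow>
     \<not> (\<exists>a s. pref a (v (play \<sigma>)) (v (play (deviate d \<sigma> a s))))"

(* P(s|_\<gamma>): plays of total profiles extending the restriction of the strategy s
   of a to the histories of a extending \<gamma> *)
definition plays_restr :: "('c list \<Rightarrow> 'a) \<Rightarrow> 'a \<Rightarrow> 'c list \<Rightarrow> ('c list \<Rightarrow> 'c) \<Rightarrow> (nat \<Rightarrow> 'c) set" where
  "plays_restr d a \<gamma> s =
     {play \<sigma> | \<sigma>. \<forall>h. d h = a \<and> (\<exists>t. h = \<gamma> @ t) \<longrightarrow> \<sigma> h = s h}"

definition g_set :: "('c list \<Rightarrow> 'a) \<Rightarrow> ((nat \<Rightarrow> 'c) \<Rightarrow> 'o) \<Rightarrow> ('a \<Rightarrow> 'o \<Rightarrow> 'o \<Rightarrow> bool)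
    \<Rightarrow> 'a \<Rightarrow> 'c list \<Rightarrow> ('c list \<Rightarrow> 'c) \<Rightarrow> 'o set" where
  "g_set d v pref a \<gamma> s =
     {x. \<exists>p \<in> plays_restr d a \<gamma> s \<inter> cyl \<gamma>. \<not> pref a x (v p)}"

definition G_set :: "('c list \<Rightarrow> 'a) \<Rightarrow> ((nat \<Rightarrow> 'c) \<Rightarrow> 'o) \<Rightarrow> ('a \<Rightarrow> 'o \<Rightarrow> 'o \<Rightarrow> bool)
    \<Rightarrow> 'a \<Rightarrow> 'c list \<Rightarrow> 'o set" where
  "G_set d v pref a \<gamma> = (\<Inter>s. g_set d v pref a \<gamma> s)"

definition strict_weak_order :: "('o \<Rightarrow> 'o \<Rightarrow> bool) \<Rightarrow> bool" where
  "strict_weak_order r \<longleftrightarrow>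
     (\<forall>x. \<not> r x x) \<and> (\<forall>x y z. r x y \<and> r y z \<longrightarrow> r x z) \<and>
     (\<forall>x y z. \<not> r x y \<and> \<not> r y z \<longrightarrow> \<not> r x z)"

definition terminal_interval :: "('o \<Rightarrow> 'o \<Rightarrow> bool) \<Rightarrow> 'o set \<Rightarrow> bool" where
  "terminal_interval r I \<longleftrightarrow> (\<forall>x y. x \<in> I \<and> \<not> r y x \<longrightarrow> y \<in> I)"

(* win-lose game <C,D,W>: player 1 chooses at histories in D, player 2 elsewhere *)
definition determined :: "'c list set \<Rightarrow> (nat \<Rightarrow> 'c) set \<Rightarrow> bool" where
  "determined D W \<longleftrightarrow>
     (\<exists>s1. \<forall>s2. play (\<lambda>h. if h \<in> D then s1 h else s2 h) \<in> W) \<or>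
     (\<exists>s2. \<forall>s1. play (\<lambda>h. if h \<in> D then s1 h else s2 h) \<notin> W)"

end

theory Submission
  imports Defs
begin

text \<open>An optimal strategy of \<open>a\<close> at \<open>h\<close> (hypothesis 5) guarantees exactly \<open>G\<^sub>a(h)\<close>. Along one
  play, let every agent choosing at \<open>h\<close> follow the optimal strategy of the shortest prefix of \<open>h\<close>
  with the same guaranteed set. Then \<open>G\<^sub>a\<close> shrinks along the play, and the outcome of the play
  lies in \<open>G\<^sub>a(h)\<close> whenever \<open>a\<close> chooses at \<open>h\<close>: if \<open>G\<^sub>a\<close> eventually stabilises, the play follows
  one optimal strategy from then on; otherwise it strictly decreases infinitely often and
  hypothesis 4 applies. Hence an agent deviating at \<open>h\<close> to \<open>c\<close> cannot force an outcome it
  prefers to that of the play, not even when it also controls the way to \<open>h c\<close>. By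
  hypotheses 2 and 3 this win-lose game is determined, so the other agents have a strategy
  against the deviation, which the equilibrium uses to punish the first deviation.\<close>

lemma length_pfx [simp]: "length (pfx p n) = n"
  by (simp add: pfx_def)

lemma pfx_Suc: "pfx p (Suc n) = pfx p n @ [p n]"
  by (simp add: pfx_def)

lemma nth_pfx: "k < n \<Longrightarrow> pfx p n ! k = p k"
  by (simp add: pfx_def)

lemma take_pfx: "k \<le> n \<Longrightarrow> take k (pfx p n) = pfx p k"
  by (simp add: pfx_def take_map min_def)

lemma pfx_eq_iff: "pfx p n = pfx q n \<longleftrightarrow> (\<forall>k<n. p k = q k)"
  by (auto simp: pfx_def)

lemma hist_eq_pfx_play: "hist \<sigma> n = pfx (play \<sigma>) n"
  by (induction n) (simp_all add: pfx_Suc play_def, simp add: pfx_def)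

lemma play_eq_iff: "play \<sigma> = p \<longleftrightarrow> (\<forall>n. \<sigma> (pfx p n) = p n)"
proof
  show "play \<sigma> = p \<Longrightarrow> \<forall>n. \<sigma> (pfx p n) = p n"
    by (metis hist_eq_pfx_play play_def)
next
  assume \<sigma>: "\<forall>n. \<sigma> (pfx p n) = p n"
  have "hist \<sigma> n = pfx p n" for n
    by (induction n) (simp_all add: pfx_Suc \<sigma>, simp add: pfx_def)
  with \<sigma> show "play \<sigma> = p"
    by (auto simp: play_def)
qed

lemma pfx_in_cyl: "p \<in> cyl (pfx p n)"
  by (simp add: cyl_def)

lemma cyl_snoc: "p \<in> cyl (h @ [c]) \<longleftrightarrow> p \<in> cyl h \<and> p (length h) = c"
  by (auto simp: cyl_def pfx_Suc)

lemma cyl_agree: "p \<in> cyl \<gamma> \<Longrightarrow> q \<in> cyl \<gamma> \<Longrightarrow> k < length \<gamma> \<Longrightarrow> p k = q k"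
  using nth_pfx[of k "length \<gamma>" p] nth_pfx[of k "length \<gamma>" q] by (simp add: cyl_def)

lemma pfx_extends_iff: "p \<in> cyl \<gamma> \<Longrightarrow> (\<exists>t. pfx p n = \<gamma> @ t) \<longleftrightarrow> length \<gamma> \<le> n"
proof
  show "\<exists>t. pfx p n = \<gamma> @ t \<Longrightarrow> length \<gamma> \<le> n"
    by (metis le_add1 length_append length_pfx)
next
  assume "p \<in> cyl \<gamma>" and "length \<gamma> \<le> n"
  then have "take (length \<gamma>) (pfx p n) = \<gamma>"
    by (simp add: take_pfx cyl_def)
  then show "\<exists>t. pfx p n = \<gamma> @ t"
    by (metis append_take_drop_id)
qed

section \<open>Guaranteed outcome sets\<close>

definition follows :: "('c list \<Rightarrow> 'a) \<Rightarrow> 'a \<Rightarrow> ('c list \<Rightarrow> 'c) \<Rightarrow> 'c list \<Rightarrow> (nat \<Rightarrow> 'c) \<Rightarrow> bool"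
  where "follows d a s \<gamma> p \<longleftrightarrow> (\<forall>n\<ge>length \<gamma>. d (pfx p n) = a \<longrightarrow> s (pfx p n) = p n)"

lemma plays_restr_iff:
  "p \<in> plays_restr d a \<gamma> s \<longleftrightarrow>
     (\<forall>n. d (pfx p n) = a \<and> (\<exists>t. pfx p n = \<gamma> @ t) \<longrightarrow> s (pfx p n) = p n)"
proof
  assume "p \<in> plays_restr d a \<gamma> s"
  then obtain \<sigma> where "play \<sigma> = p" and "\<forall>h. d h = a \<and> (\<exists>t. h = \<gamma> @ t) \<longrightarrow> \<sigma> h = s h"
    by (auto simp: plays_restr_def)
  then show "\<forall>n. d (pfx p n) = a \<and> (\<exists>t. pfx p n = \<gamma> @ t) \<longrightarrow> s (pfx p n) = p n"
    by (metis play_eq_iff)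
next
  assume p: "\<forall>n. d (pfx p n) = a \<and> (\<exists>t. pfx p n = \<gamma> @ t) \<longrightarrow> s (pfx p n) = p n"
  define \<sigma> where "\<sigma> h = (if h = pfx p (length h) then p (length h) else s h)" for h
  have "play \<sigma> = p"
    by (simp add: play_eq_iff \<sigma>_def)
  moreover have "\<sigma> h = s h" if "d h = a" and "\<exists>t. h = \<gamma> @ t" for h
  proof (cases "h = pfx p (length h)")
    case True
    then obtain n where "h = pfx p n"
      by blast
    with p that show ?thesis
      by (simp add: \<sigma>_def)
  qed (simp add: \<sigma>_def)
  ultimately show "p \<in> plays_restr d a \<gamma> s"
    unfolding plays_restr_def by blast
qed

lemma g_set_eq:
  "g_set d v pref a \<gamma> s = {x. \<exists>p\<in>cyl \<gamma>. follows d a s \<gamma> p \<and> \<not> pref a x (v p)}"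
  unfolding g_set_def follows_def by (auto simp: plays_restr_iff pfx_extends_iff; blast)

lemma follows_snoc_iff:
  assumes "p \<in> cyl h"
  shows "follows d a s h p \<longleftrightarrow>
           (d h = a \<longrightarrow> s h = p (length h)) \<and> follows d a s (h @ [p (length h)]) p"
proof -
  have split: "(\<forall>n\<ge>length h. P n) \<longleftrightarrow> P (length h) \<and> (\<forall>n\<ge>Suc (length h). P n)"
    for P :: "nat \<Rightarrow> bool"
    by (auto simp: Suc_le_eq dest: le_imp_less_or_eq)
  have "pfx p (length h) = h"
    using assms by (simp add: cyl_def)
  then show ?thesis
    unfolding follows_def split[of "\<lambda>n. d (pfx p n) = a \<longrightarrow> s (pfx p n) = p n"] by simp
qed

lemma follows_fun_upd:
  assumes "length h < length \<gamma>"
  shows "follows d a (s(h := c)) \<gamma> p \<longleftrightarrow> follows d a s \<gamma> p"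
proof -
  have "pfx p n \<noteq> h" if "length \<gamma> \<le> n" for n
    using assms that by (metis length_pfx not_le)
  then show ?thesis
    unfolding follows_def by auto
qed

locale game_form =
  fixes d :: "'c list \<Rightarrow> 'a" and v :: "(nat \<Rightarrow> 'c) \<Rightarrow> 'o"
    and pref :: "'a \<Rightarrow> 'o \<Rightarrow> 'o \<Rightarrow> bool"
begin

abbreviation g :: "'a \<Rightarrow> 'c list \<Rightarrow> ('c list \<Rightarrow> 'c) \<Rightarrow> 'o set"
  where "g \<equiv> g_set d v pref"

abbreviation G :: "'a \<Rightarrow> 'c list \<Rightarrow> 'o set"
  where "G \<equiv> G_set d v pref"

lemma G_subset_g: "G a \<gamma> \<subseteq> g a \<gamma> s"
  unfolding G_set_def by blast

lemma follows_in_g: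
  "\<not> pref a (v p) (v p) \<Longrightarrow> p \<in> cyl \<gamma> \<Longrightarrow> follows d a s \<gamma> p \<Longrightarrow> v p \<in> g a \<gamma> s"
  by (auto simp: g_set_eq)

lemma g_snoc_subset:
  assumes "d h \<noteq> a \<or> s h = c"
  shows "g a (h @ [c]) s \<subseteq> g a h s"
proof
  fix x assume "x \<in> g a (h @ [c]) s"
  then obtain p where p: "p \<in> cyl (h @ [c])" "follows d a s (h @ [c]) p" "\<not> pref a x (v p)"
    by (auto simp: g_set_eq)
  then have "p \<in> cyl h" and "p (length h) = c"
    by (simp_all add: cyl_snoc)
  with p assms have "follows d a s h p"
    by (simp add: follows_snoc_iff[OF \<open>p \<in> cyl h\<close>])
  with \<open>p \<in> cyl h\<close> p(3) show "x \<in> g a h s"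
    by (auto simp: g_set_eq)
qed

lemma G_snoc_subset: "d h \<noteq> a \<Longrightarrow> G a (h @ [c]) \<subseteq> G a h"
  using g_snoc_subset[of h a] unfolding G_set_def by blast

lemma g_fun_upd_subset:
  assumes "d h = a"
  shows "g a h (s(h := c)) \<subseteq> g a (h @ [c]) s"
proof
  fix x assume "x \<in> g a h (s(h := c))"
  then obtain p where p: "p \<in> cyl h" "follows d a (s(h := c)) h p" "\<not> pref a x (v p)"
    by (auto simp: g_set_eq)
  from follows_snoc_iff[OF p(1), THEN iffD1, OF p(2)] assms
  have "p (length h) = c" and "follows d a (s(h := c)) (h @ [c]) p"
    by auto
  with p show "x \<in> g a (h @ [c]) s"
    by (auto simp: g_set_eq cyl_snoc follows_fun_upd)
qed

lemma G_subset_snoc: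
  assumes "d h = a"
  shows "G a h \<subseteq> G a (h @ [c])"
proof -
  have "G a h \<subseteq> g a (h @ [c]) s" for s
    using G_subset_g[of a h "s(h := c)"] g_fun_upd_subset[OF assms, of s c] by (rule order_trans)
  then show ?thesis
    unfolding G_set_def by blast
qed

lemma g_pfx_antitone:
  assumes "m \<le> n" and "\<And>j. m \<le> j \<Longrightarrow> j < n \<Longrightarrow> d (pfx p j) = a \<Longrightarrow> s (pfx p j) = p j"
  shows "g a (pfx p n) s \<subseteq> g a (pfx p m) s"
  using assms(1)
proof (induction n rule: dec_induct)
  case (step k)
  have "g a (pfx p (Suc k)) s \<subseteq> g a (pfx p k) s"
    unfolding pfx_Suc using assms(2)[of k] step.hyps by (intro g_snoc_subset) blast
  then show ?case
    using step.IH by (rule order_trans)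
qed simp

end

section \<open>The anchored play\<close>

lemma antitone_upto:
  fixes f :: "nat \<Rightarrow> 'b::order"
  assumes "\<And>k. k < n \<Longrightarrow> f (Suc k) \<le> f k" and "i \<le> j" and "j \<le> n"
  shows "f j \<le> f i"
  using \<open>i \<le> j\<close> \<open>j \<le> n\<close>
proof (induction j rule: dec_induct)
  case (step k)
  then show ?case
    using assms(1)[of k] by simp
qed simp

lemma Least_take_pfx:
  "(LEAST k. f (take k (pfx p n)) = f (pfx p n)) = (LEAST k. f (pfx p k) = f (pfx p n))"
proof -
  let ?L = "LEAST k. f (pfx p k) = f (pfx p n)"
  have "?L \<le> n"
    by (rule Least_le) simp
  show ?thesis
  proof (rule Least_equality)
    show "f (take ?L (pfx p n)) = f (pfx p n)"
      using \<open>?L \<le> n\<close> LeastI[of "\<lambda>k. f (pfx p k) = f (pfx p n)" n] by (simp add: take_pfx)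
  next
    fix y assume "f (take y (pfx p n)) = f (pfx p n)"
    then show "?L \<le> y"
      using \<open>?L \<le> n\<close> by (cases "y \<le> n") (auto simp: take_pfx intro: Least_le)
  qed
qed

locale optimal_play = game_form d v pref
  for d :: "'c list \<Rightarrow> 'a" and v :: "(nat \<Rightarrow> 'c) \<Rightarrow> 'o" and pref +
  assumes pref_irrefl: "\<And>a x. \<not> pref a x x"
    and limit: "\<And>a p \<phi>. strict_mono (\<phi> :: nat \<Rightarrow> nat) \<Longrightarrow>
        (\<And>n. d (pfx p (\<phi> n)) = a \<and> G a (pfx p (\<phi> (Suc n))) \<subset> G a (pfx p (\<phi> n))) \<Longrightarrow>
        v p \<in> (\<Inter>n. G a (pfx p (\<phi> n)))"
    and optimal_exists: "\<And>a \<gamma>. \<exists>s. g a \<gamma> s = G a \<gamma>"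
begin

definition opt_strategy :: "'a \<Rightarrow> 'c list \<Rightarrow> 'c list \<Rightarrow> 'c"
  where "opt_strategy a \<gamma> = (SOME s. g a \<gamma> s = G a \<gamma>)"

lemma g_opt_strategy: "g a \<gamma> (opt_strategy a \<gamma>) = G a \<gamma>"
  unfolding opt_strategy_def using optimal_exists by (rule someI_ex)

definition anchor :: "'c list \<Rightarrow> nat"
  where "anchor h = (LEAST k. G (d h) (take k h) = G (d h) h)"

definition anchored_profile :: "'c list \<Rightarrow> 'c"
  where "anchored_profile h = opt_strategy (d h) (take (anchor h) h) h"

definition path :: "nat \<Rightarrow> 'c"
  where "path = play anchored_profile"

lemma anchor_path:
  "anchor (pfx path n) = (LEAST k. G (d (pfx path n)) (pfx path k) = G (d (pfx path n)) (pfx path n))"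
  unfolding anchor_def by (rule Least_take_pfx)

lemma anchor_path_le: "anchor (pfx path n) \<le> n"
  unfolding anchor_path by (rule Least_le) simp

lemma G_anchor_path:
  "G (d (pfx path n)) (pfx path (anchor (pfx path n))) = G (d (pfx path n)) (pfx path n)"
  unfolding anchor_path by (rule LeastI) simp

lemma path_follows_anchor:
  assumes "d (pfx path j) = a" and "d (pfx path n) = a" and "G a (pfx path j) = G a (pfx path n)"
  shows "path j = opt_strategy a (pfx path (anchor (pfx path n))) (pfx path j)"
proof -
  have "anchor (pfx path j) = anchor (pfx path n)"
    using assms by (simp add: anchor_path)
  moreover have "anchored_profile (pfx path j) = path j"
    unfolding path_def using play_eq_iff by blast
  ultimately show ?thesis
    using assms(1) anchor_path_le[of j] by (simp add: anchored_profile_def take_pfx)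
qed

lemma G_path_Suc_subset: "G a (pfx path (Suc n)) \<subseteq> G a (pfx path n)"
proof (induction n rule: less_induct)
  case (less n)
  show ?case
  proof (cases "d (pfx path n) = a")
    case False
    then show ?thesis
      using G_snoc_subset by (simp add: pfx_Suc)
  next
    case True
    define m where "m = anchor (pfx path n)"
    define s where "s = opt_strategy a (pfx path m)"
    have "m \<le> n" and G_m: "G a (pfx path m) = G a (pfx path n)"
      using anchor_path_le[of n] G_anchor_path[of n] True by (simp_all add: m_def)
    have "s (pfx path j) = path j" if "m \<le> j" and "j < Suc n" and "d (pfx path j) = a" for j
    proof -
      have "G a (pfx path n) \<subseteq> G a (pfx path j)" and "G a (pfx path j) \<subseteq> G a (pfx path m)"
        using antitone_upto[of n "\<lambda>k. G a (pfx path k)"] less that by auto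
      with G_m have "G a (pfx path j) = G a (pfx path n)"
        by blast
      with that(3) True have "path j = s (pfx path j)"
        unfolding s_def m_def by (rule path_follows_anchor)
      then show ?thesis
        by simp
    qed
    then have "g a (pfx path (Suc n)) s \<subseteq> g a (pfx path m) s"
      using \<open>m \<le> n\<close> by (intro g_pfx_antitone) auto
    then show ?thesis
      using G_subset_g[of a "pfx path (Suc n)" s] g_opt_strategy G_m unfolding s_def by blast
  qed
qed

lemma G_path_antitone: "i \<le> j \<Longrightarrow> G a (pfx path j) \<subseteq> G a (pfx path i)"
  by (rule lift_Suc_antimono_le[of "\<lambda>k. G a (pfx path k)"]) (rule G_path_Suc_subset)

lemma v_path_in_G_if_stable:
  assumes "d (pfx path n) = a"
    and stable: "\<And>k. n \<le> k \<Longrightarrow> d (pfx path k) = a \<Longrightarrow> G a (pfx path k) = G a (pfx path n)"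
  shows "v path \<in> G a (pfx path n)"
proof -
  define m where "m = anchor (pfx path n)"
  define s where "s = opt_strategy a (pfx path m)"
  have "m \<le> n" and G_m: "G a (pfx path m) = G a (pfx path n)"
    using anchor_path_le[of n] G_anchor_path[of n] assms(1) by (simp_all add: m_def)
  have "s (pfx path k) = path k" if "m \<le> k" and "d (pfx path k) = a" for k
  proof -
    have "G a (pfx path k) = G a (pfx path n)"
    proof (cases "k \<le> n")
      case True
      then have "G a (pfx path n) \<subseteq> G a (pfx path k)" and "G a (pfx path k) \<subseteq> G a (pfx path m)"
        using G_path_antitone that(1) by auto
      with G_m show ?thesis
        by blast
    qed (use stable that in simp)
    with that(2) assms(1) have "path k = s (pfx path k)"
      unfolding s_def m_def by (rule path_follows_anchor)
    then show ?thesis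
      by simp
  qed
  then have "follows d a s (pfx path m) path"
    by (simp add: follows_def)
  then have "v path \<in> g a (pfx path m) s"
    by (rule follows_in_g[OF pref_irrefl pfx_in_cyl])
  with G_m show ?thesis
    unfolding s_def by (simp add: g_opt_strategy)
qed

lemma v_path_in_G:
  assumes "d (pfx path n) = a"
  shows "v path \<in> G a (pfx path n)"
proof (rule ccontr)
  assume "v path \<notin> G a (pfx path n)"
  define P where "P j k \<longleftrightarrow> d (pfx path k) = a \<and> v path \<notin> G a (pfx path k)" for j k :: nat
  define Q where "Q j i k \<longleftrightarrow> i < k \<and> G a (pfx path k) \<subset> G a (pfx path i)" for j i k :: nat
  have "\<exists>k. P (Suc j) k \<and> Q j i k" if "P j i" for i j
  proof -
    from that have "d (pfx path i) = a" and "v path \<notin> G a (pfx path i)"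
      by (simp_all add: P_def)
    have "\<not> (\<forall>k\<ge>i. d (pfx path k) = a \<longrightarrow> G a (pfx path k) = G a (pfx path i))"
    proof
      assume "\<forall>k\<ge>i. d (pfx path k) = a \<longrightarrow> G a (pfx path k) = G a (pfx path i)"
      then have "v path \<in> G a (pfx path i)"
        by (intro v_path_in_G_if_stable[OF \<open>d (pfx path i) = a\<close>]) blast
      with \<open>v path \<notin> G a (pfx path i)\<close> show False
        by blast
    qed
    then obtain k where "i \<le> k" and "d (pfx path k) = a" and G_k: "G a (pfx path k) \<noteq> G a (pfx path i)"
      by blast
    moreover have "G a (pfx path k) \<subseteq> G a (pfx path i)"
      using G_path_antitone \<open>i \<le> k\<close> by blast
    moreover from G_k have "i \<noteq> k"
      by blast
    ultimately have "P (Suc j) k \<and> Q j i k"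
      using that unfolding P_def Q_def by auto
    then show ?thesis
      by blast
  qed
  moreover have "P 0 n"
    using assms \<open>v path \<notin> G a (pfx path n)\<close> by (simp add: P_def)
  ultimately obtain \<phi> where \<phi>: "\<And>j. P j (\<phi> j) \<and> Q j (\<phi> j) (\<phi> (Suc j))"
    using dependent_nat_choice[of P Q] by blast
  then have "strict_mono \<phi>"
    by (simp add: strict_mono_Suc_iff Q_def)
  then have "v path \<in> (\<Inter>j. G a (pfx path (\<phi> j)))"
    by (rule limit) (use \<phi> in \<open>simp add: P_def Q_def\<close>)
  with \<phi>[of 0] show False
    by (simp add: P_def)
qed

lemma v_path_in_G_snoc: "d (pfx path n) = a \<Longrightarrow> v path \<in> G a (pfx path n @ [c])"
  using v_path_in_G G_subset_snoc by blast

end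

section \<open>Punishing deviations\<close>

lemma strict_weak_order_terminal:
  "strict_weak_order r \<Longrightarrow> terminal_interval r {y. r x y}"
  unfolding strict_weak_order_def terminal_interval_def by blast

lemma play_against_follower:
  assumes in_cyl: "\<And>s2. play (\<lambda>h. if h \<in> D then s1 h else s2 h) \<in> cyl \<gamma>"
    and owned: "\<And>h. h \<in> D \<Longrightarrow> length \<gamma> \<le> length h \<Longrightarrow> d h = a"
    and "p \<in> cyl \<gamma>" and "follows d a s1 \<gamma> p"
  shows "play (\<lambda>h. if h \<in> D then s1 h else p (length h)) = p"
proof -
  define \<sigma> where "\<sigma> = (\<lambda>h. if h \<in> D then s1 h else p (length h))"
  have q: "play \<sigma> \<in> cyl \<gamma>"
    using in_cyl unfolding \<sigma>_def .
  have "\<sigma> (pfx p k) = p k" for k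
  proof (cases "k < length \<gamma>")
    case True
    then have "pfx (play \<sigma>) k = pfx p k" and "play \<sigma> k = p k"
      using cyl_agree[OF q \<open>p \<in> cyl \<gamma>\<close>] by (auto simp: pfx_eq_iff)
    moreover have "\<sigma> (pfx (play \<sigma>) k) = play \<sigma> k"
      using play_eq_iff by blast
    ultimately show ?thesis
      by simp
  next
    case False
    with owned \<open>follows d a s1 \<gamma> p\<close> show ?thesis
      unfolding \<sigma>_def follows_def by auto
  qed
  then show ?thesis
    unfolding \<sigma>_def[symmetric] by (simp add: play_eq_iff)
qed

locale nash_setting = optimal_play d v pref
  for d :: "'c list \<Rightarrow> 'a" and v :: "(nat \<Rightarrow> 'c) \<Rightarrow> 'o" and pref +
  fixes \<Gamma> :: "(nat \<Rightarrow> 'c) set set"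
  assumes pref_swo: "\<And>a. strict_weak_order (pref a)"
    and determinacy: "\<And>W D. W \<in> \<Gamma> \<Longrightarrow> determined D W"
    and terminal_preimage_in_Gamma: "\<And>a I \<gamma>. terminal_interval (pref a) I \<Longrightarrow> v -` I \<inter> cyl \<gamma> \<in> \<Gamma>"
begin

text \<open>After a deviation at \<open>pfx path n\<close>, the deviator is also given the histories leading
  there, so that winning forces the play through the deviation.\<close>

definition deviator_histories :: "nat \<Rightarrow> 'c list set"
  where "deviator_histories n = {h. d h = d (pfx path n)} \<union> pfx path ` {..n}"

definition improvements :: "nat \<Rightarrow> 'o set"
  where "improvements n = {y. pref (d (pfx path n)) (v path) y}"

definition deviation_goal :: "nat \<Rightarrow> 'c \<Rightarrow> (nat \<Rightarrow> 'c) set"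
  where "deviation_goal n c = v -` improvements n \<inter> cyl (pfx path n @ [c])"

lemma deviation_goal_in_Gamma: "deviation_goal n c \<in> \<Gamma>"
  unfolding deviation_goal_def improvements_def
  by (rule terminal_preimage_in_Gamma, rule strict_weak_order_terminal, rule pref_swo)

lemma deviation_not_winning:
  "\<not> (\<exists>s1. \<forall>s2. play (\<lambda>h. if h \<in> deviator_histories n then s1 h else s2 h) \<in> deviation_goal n c)"
proof
  assume "\<exists>s1. \<forall>s2. play (\<lambda>h. if h \<in> deviator_histories n then s1 h else s2 h) \<in> deviation_goal n c"
  then obtain s1
    where win: "\<And>s2. play (\<lambda>h. if h \<in> deviator_histories n then s1 h else s2 h) \<in> deviation_goal n c"
    by blast
  define a where "a = d (pfx path n)"
  define \<gamma> where "\<gamma> = pfx path n @ [c]"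
  have "v path \<in> G a \<gamma>"
    unfolding \<gamma>_def by (rule v_path_in_G_snoc) (simp add: a_def)
  then have "v path \<in> g a \<gamma> s1"
    using G_subset_g by blast
  moreover have "g a \<gamma> s1 \<subseteq> improvements n"
  proof
    fix x assume "x \<in> g a \<gamma> s1"
    then obtain p where p: "p \<in> cyl \<gamma>" "follows d a s1 \<gamma> p" and "\<not> pref a x (v p)"
      by (auto simp: g_set_eq)
    have "play (\<lambda>h. if h \<in> deviator_histories n then s1 h else p (length h)) = p"
    proof (rule play_against_follower[OF _ _ p])
      show "play (\<lambda>h. if h \<in> deviator_histories n then s1 h else s2 h) \<in> cyl \<gamma>" for s2
        using win unfolding deviation_goal_def \<gamma>_def by blast
      show "d h = a" if "h \<in> deviator_histories n" and "length \<gamma> \<le> length h" for h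
      proof -
        have "h \<notin> pfx path ` {..n}"
          using that(2) unfolding \<gamma>_def by auto
        with that(1) show ?thesis
          unfolding deviator_histories_def a_def by blast
      qed
    qed
    with win[of "\<lambda>h. p (length h)"] have "v p \<in> improvements n"
      unfolding deviation_goal_def by simp
    then show "x \<in> improvements n"
      using strict_weak_order_terminal[OF pref_swo, of a "v path"] \<open>\<not> pref a x (v p)\<close>
      unfolding improvements_def terminal_interval_def a_def by blast
  qed
  ultimately show False
    using pref_irrefl[of a "v path"] unfolding improvements_def a_def by blast
qed

definition punishment :: "nat \<Rightarrow> 'c \<Rightarrow> 'c list \<Rightarrow> 'c"
  where "punishment n c = (SOME s2. \<forall>s1.
     play (\<lambda>h. if h \<in> deviator_histories n then s1 h else s2 h) \<notin> deviation_goal n c)"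

lemma punishment_wins:
  "play (\<lambda>h. if h \<in> deviator_histories n then s1 h else punishment n c h) \<notin> deviation_goal n c"
proof -
  have "\<exists>s2. \<forall>s1. play (\<lambda>h. if h \<in> deviator_histories n then s1 h else s2 h) \<notin> deviation_goal n c"
    using determinacy[OF deviation_goal_in_Gamma] deviation_not_winning unfolding determined_def by blast
  then show ?thesis
    unfolding punishment_def by (rule someI2_ex) blast
qed

definition first_deviation :: "'c list \<Rightarrow> nat"
  where "first_deviation h = (LEAST k. h ! k \<noteq> path k)"

definition equilibrium :: "'c list \<Rightarrow> 'c"
  where "equilibrium h =
    (if h = pfx path (length h) then path (length h)
     else punishment (first_deviation h) (h ! first_deviation h) h)"

lemma play_equilibrium: "play equilibrium = path"
  unfolding play_eq_iff equilibrium_def by simp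

lemma equilibrium_after_deviation:
  assumes "\<forall>k<n. q k = path k" and "q n \<noteq> path n" and "n < m"
  shows "equilibrium (pfx q m) = punishment n (q n) (pfx q m)"
proof -
  have "pfx q m \<noteq> pfx path m"
    using assms(2,3) by (auto simp: pfx_eq_iff)
  moreover have "first_deviation (pfx q m) = n"
    unfolding first_deviation_def
  proof (rule Least_equality)
    show "pfx q m ! n \<noteq> path n"
      using assms(2,3) by (simp add: nth_pfx)
    show "n \<le> k" if "pfx q m ! k \<noteq> path k" for k
      using that assms(1,3) by (metis le_less_linear nth_pfx order.strict_trans)
  qed
  ultimately show ?thesis
    using assms(3) by (simp add: equilibrium_def nth_pfx)
qed

lemma play_deviation_punished:
  assumes before: "\<forall>k<n. q k = path k" and "q n \<noteq> path n"
    and a: "d (pfx path n) = a" and q: "q = play (deviate d equilibrium a s)"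
  shows "play (\<lambda>h. if h \<in> deviator_histories n then deviate d equilibrium a s h
                   else punishment n (q n) h) = q"
  unfolding play_eq_iff
proof
  fix k
  have dev_q: "deviate d equilibrium a s (pfx q k) = q k"
    using play_eq_iff q by blast
  show "(if pfx q k \<in> deviator_histories n then deviate d equilibrium a s (pfx q k)
         else punishment n (q n) (pfx q k)) = q k"
  proof (cases "pfx q k \<in> deviator_histories n")
    case False
    have "n < k"
    proof (rule ccontr)
      assume "\<not> n < k"
      then have "pfx q k = pfx path k"
        using before by (simp add: pfx_eq_iff)
      with \<open>\<not> n < k\<close> False show False
        unfolding deviator_histories_def by auto
    qed
    moreover have "d (pfx q k) \<noteq> a"
      using False a unfolding deviator_histories_def by auto
    ultimately have "deviate d equilibrium a s (pfx q k) = punishment n (q n) (pfx q k)"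
      using equilibrium_after_deviation[OF before \<open>q n \<noteq> path n\<close>] by (simp add: deviate_def)
    with False dev_q show ?thesis
      by simp
  qed (simp add: dev_q)
qed

lemma nash_eq_equilibrium: "nash_eq d v pref equilibrium"
  unfolding nash_eq_def
proof
  assume "\<exists>a s. pref a (v (play equilibrium)) (v (play (deviate d equilibrium a s)))"
  then obtain a s q where better: "pref a (v path) (v q)" and q: "q = play (deviate d equilibrium a s)"
    unfolding play_equilibrium by blast
  then have "q \<noteq> path"
    using pref_irrefl by metis
  then have "\<exists>k. q k \<noteq> path k"
    by (meson ext)
  define n where "n = (LEAST k. q k \<noteq> path k)"
  have "q n \<noteq> path n" and before: "\<forall>k<n. q k = path k"
    using LeastI_ex[OF \<open>\<exists>k. q k \<noteq> path k\<close>] not_less_Least by (auto simp: n_def)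
  then have pfx_n: "pfx q n = pfx path n"
    by (simp add: pfx_eq_iff)
  have a: "d (pfx path n) = a"
  proof (rule ccontr)
    assume "d (pfx path n) \<noteq> a"
    moreover from q have "deviate d equilibrium a s (pfx q n) = q n"
      using play_eq_iff by blast
    ultimately have "q n = path n"
      using pfx_n by (simp add: deviate_def equilibrium_def)
    with \<open>q n \<noteq> path n\<close> show False ..
  qed
  have "q \<notin> deviation_goal n (q n)"
    using punishment_wins play_deviation_punished[OF before \<open>q n \<noteq> path n\<close> a q] by metis
  moreover have "q \<in> cyl (pfx path n @ [q n])"
    using pfx_n by (simp add: cyl_def pfx_Suc)
  ultimately have "\<not> pref a (v path) (v q)"
    unfolding deviation_goal_def improvements_def a by auto
  with better show False
    by blast
qed

end

theorem theorem27:
  fixes d :: "'c list \<Rightarrow> 'a" and v :: "(nat \<Rightarrow> 'c) \<Rightarrow> 'o"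
    and pref :: "'a \<Rightarrow> 'o \<Rightarrow> 'o \<Rightarrow> bool"
    and \<Gamma> :: "(nat \<Rightarrow> 'c) set set"
  assumes swo: "\<forall>a. strict_weak_order (pref a)"
    and det: "\<forall>W \<in> \<Gamma>. \<forall>D. determined D W"
    and term_int: "\<forall>a I \<gamma>. terminal_interval (pref a) I \<longrightarrow> v -` I \<inter> cyl \<gamma> \<in> \<Gamma>"
    and limit: "\<forall>a p \<phi>. strict_mono (\<phi> :: nat \<Rightarrow> nat) \<longrightarrow>
        (\<forall>n. d (pfx p (\<phi> n)) = a \<and>
             G_set d v pref a (pfx p (\<phi> (Suc n))) \<subset> G_set d v pref a (pfx p (\<phi> n))) \<longrightarrow>
        v p \<in> (\<Inter>n. G_set d v pref a (pfx p (\<phi> n)))"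
    and opt: "\<forall>a \<gamma>. \<exists>s. g_set d v pref a \<gamma> s = G_set d v pref a \<gamma>"
  shows "\<exists>\<sigma>. nash_eq d v pref \<sigma>"
proof -
  interpret nash_setting d v pref \<Gamma>
  proof unfold_locales
    show "\<not> pref a x x" for a x
      using swo by (simp add: strict_weak_order_def)
    show "v p \<in> (\<Inter>n. G_set d v pref a (pfx p (\<phi> n)))"
      if "strict_mono \<phi>"
        and "\<And>n. d (pfx p (\<phi> n)) = a \<and>
                 G_set d v pref a (pfx p (\<phi> (Suc n))) \<subset> G_set d v pref a (pfx p (\<phi> n))"
      for a p \<phi>
      by (rule limit[rule_format, OF that(1)]) (use that(2) in blast)
    show "\<exists>s. g_set d v pref a \<gamma> s = G_set d v pref a \<gamma>" for a \<gamma>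
      using opt by blast
    show "strict_weak_order (pref a)" for a
      using swo by blast
    show "determined D W" if "W \<in> \<Gamma>" for W D
      using det that by blast
    show "v -` I \<inter> cyl \<gamma> \<in> \<Gamma>" if "terminal_interval (pref a) I" for a I \<gamma>
      using term_int that by blast
  qed
  show ?thesis
    using nash_eq_equilibrium by blast
qed

end
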